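(* For every $n>8$, if $\Delta,\Delta'\in\mathcal{P}_n$ form a special pair for rule $160$, then $lab_\Delta$ and $lab_{\Delta'}$ differ on exactly one arc among the $2n$ arcs $(i,i+1)$, $(i+1,i)$, $i\in\mathbb{Z}_n$.
   Context: Cells are indexed by $\mathbb{Z}_n=\{0,\dots,n-1\}$, indices modulo $n$. Rule $160$ has local rule $r_{160}(x_1,x_2,x_3)=x_1\wedge x_3$ and global function $f_{160,n}(x)_i=r_{160}(x_{i-1},x_i,x_{i+1})$. An update schedule is an ordered partition $\Delta=(\Delta_1,\dots,\Delta_k)$ of $\mathbb{Z}_n$ into nonempty blocks; $\mathcal{P}_n$ is the set of them. For a block $B$ let $f^{(B)}(x)_i=f_{160,n}(x)_i$ if $i\in B$ and $x_i$ otherwise; $f^{(\Delta)}_{160,n}=f^{(\Delta_k)}\circ\cdots\circ f^{(\Delta_1)}$. For $u,v\in\mathbb{Z}_n$ with $u\in\Delta_a$, $v\in\Delta_b$, $lab_\Delta((u,v))=\oplus$ if $b\le a$ and $\ominus$ if $a<b$. $\Delta\equiv\Delta'$ iff $lab_\Delta$ and $lab_{\Delta'}$ agree on every arc $(i,i+1)$ and $(i+1,i)$. A pair $\Delta,\Delta'$ is special for rule $160$ if $\Delta\not\equiv\Delta'$ but $f^{(\Delta)}_{160,n}=f^{(\Delta')}_{160,n}$. *)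

theory Defs
  imports Main
begin

text \<open>Configurations are maps nat => bool; only cells 0..n-1 are meaningful
 (cells outside are never updated). Indices are taken modulo n.\<close>

definition r160 :: "bool \<Rightarrow> bool \<Rightarrow> bool \<Rightarrow> bool" where
  "r160 x1 x2 x3 = (x1 \<and> x3)"

definition f160 :: "nat \<Rightarrow> (nat \<Rightarrow> bool) \<Rightarrow> (nat \<Rightarrow> bool)" where
  "f160 n x i = r160 (x ((i + n - 1) mod n)) (x i) (x ((i + 1) mod n))"

definition is_schedule :: "nat \<Rightarrow> nat set list \<Rightarrow> bool" where
  "is_schedule n D \<longleftrightarrow>
     (\<forall>B\<in>set D. B \<noteq> {}) \<and>
     (\<forall>a<length D. \<forall>b<length D. a \<noteq> b \<longrightarrow> D ! a \<inter> D ! b = {}) \<and>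
     \<Union>(set D) = {0..<n}"

definition block_update :: "nat \<Rightarrow> nat set \<Rightarrow> (nat \<Rightarrow> bool) \<Rightarrow> (nat \<Rightarrow> bool)" where
  "block_update n B x i = (if i \<in> B then f160 n x i else x i)"

text \<open>f^(D) = f^(D_k) o ... o f^(D_1): fold applies D_1 first.\<close>
definition sched_fun :: "nat \<Rightarrow> nat set list \<Rightarrow> (nat \<Rightarrow> bool) \<Rightarrow> (nat \<Rightarrow> bool)" where
  "sched_fun n D = fold (block_update n) D"

definition block_idx :: "nat set list \<Rightarrow> nat \<Rightarrow> nat" where
  "block_idx D u = (THE a. a < length D \<and> u \<in> D ! a)"

text \<open>Label of arc (u,v): True means \<oplus> (b \<le> a), False means \<ominus> (a < b).\<close>
definition lab :: "nat set list \<Rightarrow> nat \<times> nat \<Rightarrow> bool" where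
  "lab D uv = (block_idx D (snd uv) \<le> block_idx D (fst uv))"

definition arcs :: "nat \<Rightarrow> (nat \<times> nat) set" where
  "arcs n = {(i, (i + 1) mod n) | i. i < n} \<union> {((i + 1) mod n, i) | i. i < n}"

definition sched_equiv :: "nat \<Rightarrow> nat set list \<Rightarrow> nat set list \<Rightarrow> bool" where
  "sched_equiv n D D' \<longleftrightarrow> (\<forall>e\<in>arcs n. lab D e = lab D' e)"

definition special_pair :: "nat \<Rightarrow> nat set list \<Rightarrow> nat set list \<Rightarrow> bool" where
  "special_pair n D D' \<longleftrightarrow> \<not> sched_equiv n D D' \<and> sched_fun n D = sched_fun n D'"

end

theory Submission
  imports Defs
begin

text \<open>
  Under a schedule, the new value of a cell c is the conjunction of the initial values on a window
  around c. If c is updated after its left neighbour, which is updated after its own left neighbour,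
  and so on for m steps, and likewise for p steps to the right, then the window consists of the cells
  at distance less than m or exactly m + 1 on the left, and less than p or exactly p + 1 on the right.
  Evaluating on configurations with a single 0 shows that schedules with the same global function
  have the same window at every cell.

  A window with m + p + 5 \<le> n determines m and p. If the labels differ on the arc (c - 1, c), the left
  runs at c are positive for one schedule and 0 for the other, and the equality of the windows forces
  a common right run of length at least n - 4 starting at c. Walking along it, the runs of both
  schedules coincide; at every other cell both windows are short, so the runs coincide there too.
  Hence no other label differs. A disagreement on (c + 1, c) is the mirror image.
\<close>

section \<open>Cyclic neighbours\<close>

definition pred_cyc :: "nat \<Rightarrow> nat \<Rightarrow> nat" where
  "pred_cyc n c = (c + n - 1) mod n"

definition succ_cyc :: "nat \<Rightarrow> nat \<Rightarrow> nat" where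
  "succ_cyc n c = (c + 1) mod n"

lemma pred_cyc_less: "c < n \<Longrightarrow> pred_cyc n c < n"
  by (simp add: pred_cyc_def)

lemma succ_cyc_less: "c < n \<Longrightarrow> succ_cyc n c < n"
  by (simp add: succ_cyc_def)

lemma pred_cyc_eq: "c < n \<Longrightarrow> pred_cyc n c = (if c = 0 then n - 1 else c - 1)"
  by (cases c) (auto simp: pred_cyc_def)

lemma succ_pred_cyc: "c < n \<Longrightarrow> succ_cyc n (pred_cyc n c) = c"
  by (cases c) (auto simp: succ_cyc_def pred_cyc_def mod_Suc_eq)

lemma pred_succ_cyc: "c < n \<Longrightarrow> pred_cyc n (succ_cyc n c) = c"
  by (cases "Suc c = n") (auto simp: succ_cyc_def pred_cyc_def)

lemma funpow_succ_cyc: "c < n \<Longrightarrow> (succ_cyc n ^^ k) c = (c + k) mod n"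
  by (induction k) (simp_all add: succ_cyc_def mod_Suc_eq)

lemma funpow_succ_cyc_less: "c < n \<Longrightarrow> (succ_cyc n ^^ k) c < n"
  by (induction k) (simp_all add: succ_cyc_less)

lemma funpow_pred_cyc_less: "c < n \<Longrightarrow> (pred_cyc n ^^ k) c < n"
  by (induction k) (simp_all add: pred_cyc_less)

lemma funpow_succ_cyc_pred_cyc: "c < n \<Longrightarrow> (succ_cyc n ^^ k) ((pred_cyc n ^^ k) c) = c"
proof (induction k)
  case (Suc k)
  then show ?case
    using succ_pred_cyc[OF funpow_pred_cyc_less[OF Suc.prems, of k]]
    by (metis funpow.simps(2) funpow_Suc_right o_apply)
qed simp

lemma funpow_pred_cyc:
  assumes "c < n" "k \<le> n"
  shows "(pred_cyc n ^^ k) c = (succ_cyc n ^^ (n - k)) c"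
proof -
  let ?y = "(pred_cyc n ^^ k) c"
  have "(succ_cyc n ^^ (n - k)) c = (succ_cyc n ^^ (n - k)) ((succ_cyc n ^^ k) ?y)"
    using assms by (simp add: funpow_succ_cyc_pred_cyc)
  also have "\<dots> = (succ_cyc n ^^ (n - k + k)) ?y"
    by (simp only: funpow_add o_apply)
  also have "\<dots> = (succ_cyc n ^^ n) ?y"
    using assms by simp
  also have "\<dots> = ?y"
    using assms by (simp add: funpow_succ_cyc funpow_pred_cyc_less)
  finally show ?thesis ..
qed

lemma funpow_pred_cyc_self: "c < n \<Longrightarrow> (pred_cyc n ^^ n) c = c"
  by (simp add: funpow_pred_cyc)

lemma funpow_succ_cyc_self: "c < n \<Longrightarrow> (succ_cyc n ^^ n) c = c"
  by (simp add: funpow_succ_cyc)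

lemma funpow_pred_cyc_minus_one: "c < n \<Longrightarrow> (pred_cyc n ^^ (n - 1)) c = succ_cyc n c"
  by (simp add: funpow_pred_cyc)

lemma funpow_succ_cyc_minus_one: "c < n \<Longrightarrow> (succ_cyc n ^^ (n - 1)) c = pred_cyc n c"
  using funpow_pred_cyc[of c n 1] by simp

definition reflect_cyc :: "nat \<Rightarrow> nat \<Rightarrow> nat" where
  "reflect_cyc n c = (n - c) mod n"

lemma reflect_cyc_less: "0 < n \<Longrightarrow> reflect_cyc n c < n"
  by (simp add: reflect_cyc_def)

lemma reflect_reflect_cyc: "c < n \<Longrightarrow> reflect_cyc n (reflect_cyc n c) = c"
  by (cases "c = 0") (auto simp: reflect_cyc_def)

lemma succ_cyc_reflect_cyc: "c < n \<Longrightarrow> succ_cyc n (reflect_cyc n c) = reflect_cyc n (pred_cyc n c)"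
  by (cases "c = 0"; cases "c = 1") (auto simp: reflect_cyc_def succ_cyc_def pred_cyc_eq)

lemma pred_cyc_reflect_cyc: "c < n \<Longrightarrow> pred_cyc n (reflect_cyc n c) = reflect_cyc n (succ_cyc n c)"
  by (metis pred_succ_cyc reflect_cyc_less reflect_reflect_cyc succ_cyc_less succ_cyc_reflect_cyc
      less_nat_zero_code neq0_conv)

lemma ex_funpow_succ_cyc:
  assumes "i < n" "c < n"
  shows "\<exists>k<n. (succ_cyc n ^^ k) i = c"
proof
  let ?k = "(c + n - i) mod n"
  have "(i + ?k) mod n = (i + (c + n - i)) mod n"
    by (rule mod_add_right_eq)
  also have "i + (c + n - i) = c + n"
    using assms by simp
  finally show "?k < n \<and> (succ_cyc n ^^ ?k) i = c"
    using assms by (simp add: funpow_succ_cyc)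
qed

section \<open>Runs of earlier updates\<close>

definition earlier :: "nat set list \<Rightarrow> (nat \<Rightarrow> nat) \<Rightarrow> nat \<Rightarrow> bool" where
  "earlier D s c \<longleftrightarrow> block_idx D (s c) < block_idx D c"

definition earlier_run :: "nat set list \<Rightarrow> (nat \<Rightarrow> nat) \<Rightarrow> nat \<Rightarrow> nat" where
  "earlier_run D s c = (LEAST k. \<not> earlier D s ((s ^^ k) c))"

lemma block_idx_funpow_earlier:
  "\<forall>j<k. earlier D s ((s ^^ j) c) \<Longrightarrow> block_idx D ((s ^^ k) c) + k \<le> block_idx D c"
proof (induction k)
  case (Suc k)
  then have "block_idx D ((s ^^ k) c) + k \<le> block_idx D c" and "earlier D s ((s ^^ k) c)"
    by simp_all
  then show ?case by (simp add: earlier_def)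
qed simp

lemma ex_not_earlier:
  assumes "(s ^^ n) c = c" and "0 < n"
  shows "\<exists>k<n. \<not> earlier D s ((s ^^ k) c)"
  using block_idx_funpow_earlier[of n D s c] assms by auto

lemma earlier_run_less: "(s ^^ n) c = c \<Longrightarrow> 0 < n \<Longrightarrow> earlier_run D s c < n"
  unfolding earlier_run_def by (meson ex_not_earlier Least_le le_less_trans)

lemma earlier_of_less_earlier_run: "j < earlier_run D s c \<Longrightarrow> earlier D s ((s ^^ j) c)"
  unfolding earlier_run_def using not_less_Least by blast

lemma earlier_run_rec:
  assumes "(s ^^ n) c = c" and "0 < n"
  shows "earlier_run D s c = (if earlier D s c then Suc (earlier_run D s (s c)) else 0)"
proof (cases "earlier D s c")
  case True
  obtain k where "\<not> earlier D s ((s ^^ k) c)"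
    using ex_not_earlier[OF assms] by blast
  with True have "earlier_run D s c = Suc (LEAST k. \<not> earlier D s ((s ^^ Suc k) c))"
    unfolding earlier_run_def by (intro Least_Suc) auto
  then show ?thesis using True by (simp add: earlier_run_def funpow_swap1)
next
  case False
  then show ?thesis unfolding earlier_run_def by (simp add: Least_eq_0)
qed

lemma earlier_run_le_of_not_earlier:
  assumes "(s ^^ (n - 1)) c = t c" and "1 < n" and "\<not> earlier D t c"
  shows "earlier_run D s c \<le> n - 2"
proof (rule ccontr)
  assume "\<not> ?thesis"
  then have "\<forall>j<n - 1. earlier D s ((s ^^ j) c)"
    by (simp add: earlier_of_less_earlier_run)
  from block_idx_funpow_earlier[OF this] have "earlier D t c"
    using assms(1,2) by (simp add: earlier_def)
  with assms(3) show False ..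
qed

section \<open>Evaluating a schedule\<close>

lemma block_idx_eqI:
  assumes "is_schedule n D" "a < length D" "c \<in> D ! a"
  shows "block_idx D c = a"
  unfolding block_idx_def
proof (rule the_equality)
  fix b assume b: "b < length D \<and> c \<in> D ! b"
  show "b = a"
  proof (rule ccontr)
    assume "b \<noteq> a"
    then have "D ! b \<inter> D ! a = {}"
      using assms(1,2) b unfolding is_schedule_def by blast
    with b assms(3) show False by blast
  qed
qed (use assms in simp)

lemma block_idx_mem:
  assumes "is_schedule n D" "c < n"
  shows "block_idx D c < length D" "c \<in> D ! block_idx D c"
proof -
  have "c \<in> \<Union>(set D)"
    using assms unfolding is_schedule_def by simp
  then obtain a where "a < length D" "c \<in> D ! a"
    by (auto simp: in_set_conv_nth)
  with block_idx_eqI[OF assms(1) this] show "block_idx D c < length D" "c \<in> D ! block_idx D c"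
    by simp_all
qed

lemma fold_take_Suc:
  "t < length D \<Longrightarrow> fold f (take (Suc t) D) x = f (D ! t) (fold f (take t D) x)"
  by (simp add: take_Suc_conv_app_nth)

lemma fold_block_update_before:
  assumes S: "is_schedule n D" and c: "c < n"
  shows "t \<le> block_idx D c \<Longrightarrow> fold (block_update n) (take t D) x c = x c"
proof (induction t)
  case (Suc t)
  then have t: "t < length D"
    using block_idx_mem[OF S c] by simp
  then have "c \<notin> D ! t"
    using block_idx_eqI[OF S t] Suc.prems by auto
  with Suc show ?case
    by (simp add: fold_take_Suc[OF t] block_update_def)
qed simp

lemma fold_block_update_after:
  assumes S: "is_schedule n D" and c: "c < n"
  shows "block_idx D c < t \<Longrightarrow> t \<le> length D \<Longrightarrow>
    fold (block_update n) (take t D) x c = fold (block_update n) (take (Suc (block_idx D c)) D) x c"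
proof (induction t)
  case (Suc t)
  show ?case
  proof (cases "t = block_idx D c")
    case False
    have t: "t < length D"
      using Suc.prems by simp
    then have "c \<notin> D ! t"
      using block_idx_eqI[OF S t] False by auto
    with Suc False show ?thesis
      by (simp add: fold_take_Suc[OF t] block_update_def)
  qed simp
qed simp

definition neighbour_value ::
    "nat \<Rightarrow> nat set list \<Rightarrow> (nat \<Rightarrow> bool) \<Rightarrow> (nat \<Rightarrow> nat) \<Rightarrow> nat \<Rightarrow> bool" where
  "neighbour_value n D x s c = (if earlier D s c then sched_fun n D x (s c) else x (s c))"

lemma sched_fun_cell:
  assumes S: "is_schedule n D" and c: "c < n"
  shows "sched_fun n D x c = (neighbour_value n D x (pred_cyc n) c \<and> neighbour_value n D x (succ_cyc n) c)"
proof -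
  define G where "G t = fold (block_update n) (take t D) x" for t
  have final: "sched_fun n D x e = G (Suc (block_idx D e)) e" if e: "e < n" for e
  proof -
    have "sched_fun n D x e = G (length D) e"
      by (simp add: sched_fun_def G_def)
    also have "\<dots> = G (Suc (block_idx D e)) e"
      unfolding G_def using fold_block_update_after[OF S e, of "length D"] block_idx_mem[OF S e] by simp
    finally show ?thesis .
  qed
  have seen: "G (block_idx D c) e = (if block_idx D e < block_idx D c then sched_fun n D x e else x e)"
    if e: "e < n" for e
  proof (cases "block_idx D e < block_idx D c")
    case True
    then have "G (block_idx D c) e = G (Suc (block_idx D e)) e"
      unfolding G_def using fold_block_update_after[OF S e, of "block_idx D c"] block_idx_mem[OF S c]
      by simp
    with True show ?thesis
      using final[OF e] by simp
  next
    case False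
    then show ?thesis
      unfolding G_def using fold_block_update_before[OF S e] by simp
  qed
  have "sched_fun n D x c = block_update n (D ! block_idx D c) (G (block_idx D c)) c"
    unfolding final[OF c] G_def using block_idx_mem[OF S c] by (simp only: fold_take_Suc)
  also have "\<dots> = (G (block_idx D c) (pred_cyc n c) \<and> G (block_idx D c) (succ_cyc n c))"
    using block_idx_mem[OF S c] by (simp add: block_update_def f160_def r160_def pred_cyc_def succ_cyc_def)
  finally show ?thesis
    using seen[OF pred_cyc_less[OF c]] seen[OF succ_cyc_less[OF c]]
    by (simp add: neighbour_value_def earlier_def)
qed

lemma not_neighbour_value_iff:
  assumes step: "\<And>c. c < n \<Longrightarrow> s c < n" and inv: "\<And>c. c < n \<Longrightarrow> t (s c) = c"
    and cyclic: "\<And>c. c < n \<Longrightarrow> (s ^^ n) c = c"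
    and cell: "\<And>c. c < n \<Longrightarrow>
      sched_fun n D x c = (neighbour_value n D x s c \<and> neighbour_value n D x t c)"
    and x: "x = (\<lambda>y. y \<noteq> j)" and c: "c < n"
  shows "\<not> neighbour_value n D x s c \<longleftrightarrow>
    j \<in> (\<lambda>e. (s ^^ e) c) ` {e. e < earlier_run D s c \<or> e = earlier_run D s c + 1}"
  using c
proof (induction "earlier_run D s c" arbitrary: c)
  case 0
  then have "\<not> earlier D s c"
    using earlier_run_rec[OF cyclic[OF 0(2)]] by (auto split: if_splits)
  with 0 show ?case
    by (auto simp: neighbour_value_def x)
next
  case (Suc k)
  have rec: "earlier D s c" "earlier_run D s (s c) = k"
    using earlier_run_rec[OF cyclic[OF Suc(3)], of D] Suc(2,3) by (auto split: if_splits)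
  then have "\<not> earlier D t (s c)"
    using inv[OF Suc(3)] by (auto simp: earlier_def)
  then have "\<not> neighbour_value n D x s c \<longleftrightarrow> c = j \<or> \<not> neighbour_value n D x s (s c)"
    using rec cell[OF step[OF Suc(3)]] inv[OF Suc(3)] by (auto simp: neighbour_value_def x)
  also have "\<dots> \<longleftrightarrow> c = j \<or> j \<in> (\<lambda>e. (s ^^ Suc e) c) ` {e. e < k \<or> e = k + 1}"
    using Suc(1)[OF rec(2)[symmetric] step[OF Suc(3)]] rec(2) by (simp add: funpow_swap1)
  also have "\<dots> \<longleftrightarrow> j \<in> (\<lambda>e. (s ^^ e) c) ` {e. e < Suc k \<or> e = Suc k + 1}"
  proof -
    have "{e. e < Suc k \<or> e = Suc k + 1} = insert 0 (Suc ` {e. e < k \<or> e = k + 1})"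
      by (auto simp: image_iff less_Suc_eq_0_disj)
    then have "(\<lambda>e. (s ^^ e) c) ` {e. e < Suc k \<or> e = Suc k + 1} =
        insert c ((\<lambda>e. (s ^^ Suc e) c) ` {e. e < k \<or> e = k + 1})"
      by (simp only: image_insert image_image funpow_0)
    then show ?thesis
      by (simp only: insert_iff eq_commute[of j c])
  qed
  finally show ?case
    using Suc(2) by simp
qed

definition dependency_cells :: "nat \<Rightarrow> nat \<Rightarrow> nat \<Rightarrow> nat \<Rightarrow> nat set" where
  "dependency_cells n c m p =
     (\<lambda>e. (pred_cyc n ^^ e) c) ` {e. e < m \<or> e = m + 1} \<union>
     (\<lambda>e. (succ_cyc n ^^ e) c) ` {e. e < p \<or> e = p + 1}"

lemma not_sched_fun_iff:
  assumes S: "is_schedule n D" and c: "c < n"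
  shows "\<not> sched_fun n D (\<lambda>y. y \<noteq> j) c \<longleftrightarrow>
    j \<in> dependency_cells n c (earlier_run D (pred_cyc n) c) (earlier_run D (succ_cyc n) c)"
proof -
  let ?x = "\<lambda>y. y \<noteq> j" and ?m = "earlier_run D (pred_cyc n) c" and ?p = "earlier_run D (succ_cyc n) c"
  have left: "\<not> neighbour_value n D ?x (pred_cyc n) c \<longleftrightarrow>
      j \<in> (\<lambda>e. (pred_cyc n ^^ e) c) ` {e. e < ?m \<or> e = ?m + 1}"
    using sched_fun_cell[OF S]
    by (intro not_neighbour_value_iff[where t = "succ_cyc n"] c refl)
      (simp_all add: pred_cyc_less succ_pred_cyc funpow_pred_cyc_self)
  have right: "\<not> neighbour_value n D ?x (succ_cyc n) c \<longleftrightarrow>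
      j \<in> (\<lambda>e. (succ_cyc n ^^ e) c) ` {e. e < ?p \<or> e = ?p + 1}"
    using sched_fun_cell[OF S]
    by (intro not_neighbour_value_iff[where t = "pred_cyc n"] c refl)
      (simp_all add: succ_cyc_less pred_succ_cyc funpow_succ_cyc_self conj_commute)
  show ?thesis
    by (simp only: sched_fun_cell[OF S c] de_Morgan_conj left right dependency_cells_def Un_iff)
qed

section \<open>Dependency windows\<close>

lemma reflect_cyc_eq: "e \<le> n \<Longrightarrow> reflect_cyc n e = (if e = 0 then 0 else n - e)"
  by (auto simp: reflect_cyc_def)

lemma mod_eq_if_le: "e \<le> (n::nat) \<Longrightarrow> e mod n = (if e = n then 0 else e)"
  by auto

text \<open>
  Offsets, relative to a cell with left run m and right run p, of the cells its new value depends on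
  (rotate_dependency_cells); reflect_cyc n e is the offset of the cell e steps to the left. The cell
  exactly m steps to the left (p to the right) is missing: it is read only after its own update, and
  rule 160 ignores the old value of the centre.
\<close>
definition window :: "nat \<Rightarrow> nat \<Rightarrow> nat \<Rightarrow> nat set" where
  "window n m p = reflect_cyc n ` {e. e < m \<or> e = m + 1} \<union> (\<lambda>e. e mod n) ` {e. e < p \<or> e = p + 1}"

lemma mem_window:
  assumes "0 < d" "d < n" "m < n" "p < n"
  shows "d \<in> window n m p \<longleftrightarrow> n < m + d \<or> n = m + 1 + d \<or> d < p \<or> d = p + 1"
proof -
  have left: "d \<in> reflect_cyc n ` {e. e < m \<or> e = m + 1} \<longleftrightarrow> n < m + d \<or> n = m + 1 + d"
  proof
    assume "d \<in> reflect_cyc n ` {e. e < m \<or> e = m + 1}"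
    then obtain e where "e < m \<or> e = m + 1" "d = (n - e) mod n"
      by (auto simp: reflect_cyc_def)
    then show "n < m + d \<or> n = m + 1 + d"
      using assms by (cases "e = 0") (auto simp: reflect_cyc_eq mod_eq_if_le split: if_splits)
  next
    assume "n < m + d \<or> n = m + 1 + d"
    then have "n - d < m \<or> n - d = m + 1" and "d = reflect_cyc n (n - d)"
      using assms by (auto simp: reflect_cyc_def)
    then show "d \<in> reflect_cyc n ` {e. e < m \<or> e = m + 1}" by blast
  qed
  have right: "d \<in> (\<lambda>e. e mod n) ` {e. e < p \<or> e = p + 1} \<longleftrightarrow> d < p \<or> d = p + 1"
  proof
    assume "d \<in> (\<lambda>e. e mod n) ` {e. e < p \<or> e = p + 1}"
    then obtain e where "e < p \<or> e = p + 1" "d = e mod n" by auto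
    then show "d < p \<or> d = p + 1"
      using assms by (auto simp: reflect_cyc_eq mod_eq_if_le split: if_splits)
  next
    assume "d < p \<or> d = p + 1"
    then show "d \<in> (\<lambda>e. e mod n) ` {e. e < p \<or> e = p + 1}"
      using assms by (intro image_eqI[of d _ d]) auto
  qed
  show ?thesis unfolding window_def using left right by blast
qed

lemma zero_mem_window:
  assumes "m < n" "p < n"
  shows "0 \<in> window n m p \<longleftrightarrow> 0 < m \<or> 0 < p \<or> n = m + 1 \<or> n = p + 1"
proof -
  have left: "0 \<in> reflect_cyc n ` {e. e < m \<or> e = m + 1} \<longleftrightarrow> 0 < m \<or> n = m + 1"
  proof
    assume "0 < m \<or> n = m + 1"
    then have "reflect_cyc n 0 = 0 \<and> 0 < m \<or> reflect_cyc n (m + 1) = 0 \<and> n = m + 1"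
      by (auto simp: reflect_cyc_def)
    then show "0 \<in> reflect_cyc n ` {e. e < m \<or> e = m + 1}"
      by (metis (mono_tags, lifting) image_eqI mem_Collect_eq)
  qed (use assms in \<open>auto simp: reflect_cyc_eq split: if_splits\<close>)
  have right: "0 \<in> (\<lambda>e. e mod n) ` {e. e < p \<or> e = p + 1} \<longleftrightarrow> 0 < p \<or> n = p + 1"
  proof
    assume "0 < p \<or> n = p + 1"
    then have "0 mod n = 0 \<and> 0 < p \<or> (p + 1) mod n = 0 \<and> n = p + 1"
      by auto
    then show "0 \<in> (\<lambda>e. e mod n) ` {e. e < p \<or> e = p + 1}"
      by (metis (mono_tags, lifting) image_eqI mem_Collect_eq)
  qed (use assms in \<open>auto simp: mod_eq_if_le split: if_splits\<close>)
  show ?thesis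
    unfolding window_def using left right by blast
qed

lemma window_swap:
  assumes "m < n" "p < n"
  shows "window n p m = reflect_cyc n ` window n m p"
proof -
  have twice: "reflect_cyc n (reflect_cyc n e) = e mod n" and mod: "reflect_cyc n (e mod n) = reflect_cyc n e"
    if "e \<le> n" for e
    using that by (cases "e = 0 \<or> e = n"; auto simp: reflect_cyc_def)+
  have "reflect_cyc n ` reflect_cyc n ` {e. e < m \<or> e = m + 1} = (\<lambda>e. e mod n) ` {e. e < m \<or> e = m + 1}"
    unfolding image_image using assms by (intro image_cong) (auto simp: twice)
  moreover have
    "reflect_cyc n ` (\<lambda>e. e mod n) ` {e. e < p \<or> e = p + 1} = reflect_cyc n ` {e. e < p \<or> e = p + 1}"
    unfolding image_image using assms by (intro image_cong) (auto simp: mod)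
  ultimately show ?thesis
    unfolding window_def image_Un by blast
qed

lemma rotate_funpow_succ_cyc:
  assumes "c < n"
  shows "((succ_cyc n ^^ k) c + (n - c)) mod n = k mod n"
proof -
  have "((c + k) mod n + (n - c)) mod n = (c + k + (n - c)) mod n"
    by (rule mod_add_left_eq)
  also have "c + k + (n - c) = k + n"
    using assms by simp
  finally show ?thesis
    using assms by (simp add: funpow_succ_cyc)
qed

lemma rotate_dependency_cells:
  assumes "c < n" "m < n" "p < n"
  shows "(\<lambda>j. (j + (n - c)) mod n) ` dependency_cells n c m p = window n m p"
proof -
  have pred: "((pred_cyc n ^^ e) c + (n - c)) mod n = reflect_cyc n e" if "e \<le> n" for e
    unfolding funpow_pred_cyc[OF assms(1) that] rotate_funpow_succ_cyc[OF assms(1)] reflect_cyc_def ..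
  then have "(\<lambda>j. (j + (n - c)) mod n) ` (\<lambda>e. (pred_cyc n ^^ e) c) ` {e. e < m \<or> e = m + 1} =
      reflect_cyc n ` {e. e < m \<or> e = m + 1}"
    unfolding image_image using assms(2) by (intro image_cong) (auto simp: pred simp del: funpow.simps)
  moreover have "(\<lambda>j. (j + (n - c)) mod n) ` (\<lambda>e. (succ_cyc n ^^ e) c) ` {e. e < p \<or> e = p + 1} =
      (\<lambda>e. e mod n) ` {e. e < p \<or> e = p + 1}"
    unfolding image_image by (intro image_cong) (simp_all only: rotate_funpow_succ_cyc[OF assms(1)])
  ultimately show ?thesis
    unfolding dependency_cells_def window_def image_Un by simp
qed

lemma window_eq_of_sched_fun_eq:
  assumes S: "is_schedule n D" and S': "is_schedule n D'"
    and eq: "sched_fun n D = sched_fun n D'" and c: "c < n"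
  shows "window n (earlier_run D (pred_cyc n) c) (earlier_run D (succ_cyc n) c) =
    window n (earlier_run D' (pred_cyc n) c) (earlier_run D' (succ_cyc n) c)"
proof -
  have less: "earlier_run E (pred_cyc n) c < n" "earlier_run E (succ_cyc n) c < n" for E
    using c by (simp_all add: earlier_run_less funpow_pred_cyc_self funpow_succ_cyc_self)
  have "j \<in> dependency_cells n c (earlier_run D (pred_cyc n) c) (earlier_run D (succ_cyc n) c) \<longleftrightarrow>
      j \<in> dependency_cells n c (earlier_run D' (pred_cyc n) c) (earlier_run D' (succ_cyc n) c)" for j
    using not_sched_fun_iff[OF S c, of j] not_sched_fun_iff[OF S' c, of j] eq by simp
  then show ?thesis
    using rotate_dependency_cells[OF c less(1,2)] by (metis subset_antisym subsetI)
qed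

lemma window_inj:
  assumes "m < n" "p < n" "m' < n" "p' < n" and short: "m + p + 5 \<le> n"
    and eq: "window n m p = window n m' p'"
  shows "m = m' \<and> p = p'"
proof -
  have I: "(n < m + d \<or> n = m + 1 + d \<or> d < p \<or> d = p + 1) \<longleftrightarrow>
      (n < m' + d \<or> n = m' + 1 + d \<or> d < p' \<or> d = p' + 1)" if "0 < d" "d < n" for d
    using eq mem_window[OF that assms(1,2)] mem_window[OF that assms(3,4)] by simp
  have "n < m' + (p + 1) \<or> n = m' + 1 + (p + 1) \<or> p + 1 < p' \<or> p + 1 = p' + 1"
    using I[of "p + 1"] short by simp
  moreover have "\<not> (n < m' + (p + 2) \<or> n = m' + 1 + (p + 2) \<or> p + 2 < p' \<or> p + 2 = p' + 1)"
    using I[of "p + 2"] short by simp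
  moreover have "\<not> (n < m' + (p + 3) \<or> n = m' + 1 + (p + 3) \<or> p + 3 < p' \<or> p + 3 = p' + 1)"
    using I[of "p + 3"] short by simp
  ultimately have "p' = p"
    by linarith
  have "n < m' + (n - m - 1) \<or> n = m' + 1 + (n - m - 1) \<or> n - m - 1 < p' \<or> n - m - 1 = p' + 1"
    using I[of "n - m - 1"] short by simp
  moreover have "\<not> (n < m' + (n - m - 2) \<or> n = m' + 1 + (n - m - 2) \<or> n - m - 2 < p' \<or> n - m - 2 = p' + 1)"
    using I[of "n - m - 2"] short by linarith
  moreover have "\<not> (n < m' + (n - m - 3) \<or> n = m' + 1 + (n - m - 3) \<or> n - m - 3 < p' \<or> n - m - 3 = p' + 1)"
    using I[of "n - m - 3"] short by linarith
  ultimately have "m' = m"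
    using short \<open>p' = p\<close> by linarith
  with \<open>p' = p\<close> show ?thesis by simp
qed

lemma mem_window_zero_left:
  assumes "0 < d" "d < n" "q < n"
  shows "d \<in> window n 0 q \<longleftrightarrow> d = n - 1 \<or> d < q \<or> d = q + 1"
  using mem_window[OF assms(1,2) _ assms(3), of 0] assms(1,2) by auto

context
  fixes n m p q :: nat
  assumes n: "8 < n" and m: "1 \<le> m" "m < n" and p: "p < n" and q: "q \<le> n - 2"
    and eq: "window n m p = window n 0 q"
begin

private lemma mem_windows_iff:
  "0 < d \<Longrightarrow> d < n \<Longrightarrow>
    (n < m + d \<or> n = m + 1 + d \<or> d < p \<or> d = p + 1) \<longleftrightarrow> (d = n - 1 \<or> d < q \<or> d = q + 1)"
  using eq mem_window[of d n m p] mem_window_zero_left[of d n q] m p q n by simp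

private lemma bounds_from_offset_q: "p \<le> q" "q \<noteq> p + 1" "m + q \<le> n"
proof -
  have "0 \<in> window n 0 q"
    using eq zero_mem_window[of m n p] m p by simp
  then have "0 < q"
    using zero_mem_window[of 0 n q] n q by auto
  then have "\<not> (n < m + q \<or> n = m + 1 + q \<or> q < p \<or> q = p + 1)"
    using mem_windows_iff[of q] n q by simp
  then show "p \<le> q" "q \<noteq> p + 1" "m + q \<le> n"
    by simp_all
qed

lemma window_eq_zero_left_le: "n \<le> q + 4"
proof (rule ccontr)
  assume short: "\<not> n \<le> q + 4"
  have "n < m + (n - 1) \<or> n - 1 < p \<or> n - 1 = p + 1"
    using mem_windows_iff[of "n - 1"] n m by auto
  then have "2 \<le> m"
    using bounds_from_offset_q short by linarith
  moreover have "\<not> (n < m + (n - 2) \<or> n = m + 1 + (n - 2) \<or> n - 2 < p \<or> n - 2 = p + 1)"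
    using mem_windows_iff[of "n - 2"] short n by auto
  ultimately have "m = 2"
    by linarith
  moreover have "\<not> (n - 3 = n - 1 \<or> n - 3 < q \<or> n - 3 = q + 1)"
    using short by linarith
  ultimately show False
    using mem_windows_iff[of "n - 3"] n by simp
qed

lemma window_eq_zero_left_eq: "p = q"
proof (rule ccontr)
  assume "p \<noteq> q"
  then have "p + 2 \<le> q"
    using bounds_from_offset_q by simp
  moreover have "5 \<le> q"
    using window_eq_zero_left_le n by simp
  then have "n < m + (q - 1) \<or> n = m + 1 + (q - 1) \<or> q - 1 < p \<or> q - 1 = p + 1"
    and "n < m + (q - 2) \<or> n = m + 1 + (q - 2) \<or> q - 2 < p \<or> q - 2 = p + 1"
    and "n < m + (q - 3) \<or> n = m + 1 + (q - 3) \<or> q - 3 < p \<or> q - 3 = p + 1"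
    using mem_windows_iff[of "q - 1"] mem_windows_iff[of "q - 2"] mem_windows_iff[of "q - 3"] q n by simp_all
  ultimately show False
    using bounds_from_offset_q by linarith
qed

end

section \<open>Run profiles\<close>

text \<open>
  The properties of the left and right runs of a schedule (run_profile_earlier) on which the
  uniqueness argument rests; stating them abstractly lets the argument be reused for the mirror
  image (run_profile_reflect).
\<close>
definition run_profile ::
    "nat \<Rightarrow> (nat \<Rightarrow> bool) \<Rightarrow> (nat \<Rightarrow> bool) \<Rightarrow> (nat \<Rightarrow> nat) \<Rightarrow> (nat \<Rightarrow> nat) \<Rightarrow> bool" where
  "run_profile n A B m p \<longleftrightarrow> (\<forall>c<n.
     m c = (if A c then Suc (m (pred_cyc n c)) else 0) \<and>
     p c = (if B c then Suc (p (succ_cyc n c)) else 0) \<and>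
     \<not> (A (succ_cyc n c) \<and> B c) \<and>
     m c < n \<and> p c < n \<and>
     (\<not> A c \<longrightarrow> p c \<le> n - 2) \<and> (\<not> B c \<longrightarrow> m c \<le> n - 2))"

lemma
  assumes "run_profile n A B m p" and "c < n"
  shows run_profile_left: "m c = (if A c then Suc (m (pred_cyc n c)) else 0)"
    and run_profile_right: "p c = (if B c then Suc (p (succ_cyc n c)) else 0)"
    and run_profile_not_both: "\<not> (A (succ_cyc n c) \<and> B c)"
    and run_profile_left_less: "m c < n"
    and run_profile_right_less: "p c < n"
    and run_profile_right_le: "\<not> A c \<Longrightarrow> p c \<le> n - 2"
    and run_profile_left_le: "\<not> B c \<Longrightarrow> m c \<le> n - 2"
  using assms unfolding run_profile_def by blast+

lemma run_profile_pos:
  assumes "run_profile n A B m p" and "c < n"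
  shows "A c \<longleftrightarrow> 0 < m c" and "B c \<longleftrightarrow> 0 < p c"
  using run_profile_left[OF assms] run_profile_right[OF assms] by simp_all

lemma run_profile_earlier:
  assumes "1 < n"
  shows "run_profile n (earlier D (pred_cyc n)) (earlier D (succ_cyc n))
    (earlier_run D (pred_cyc n)) (earlier_run D (succ_cyc n))"
  unfolding run_profile_def
proof (intro allI impI conjI)
  fix c assume c: "c < n"
  note pred_cyclic = funpow_pred_cyc_self[OF c] and succ_cyclic = funpow_succ_cyc_self[OF c]
  have n0: "0 < n" using assms by simp
  show "earlier_run D (pred_cyc n) c =
      (if earlier D (pred_cyc n) c then Suc (earlier_run D (pred_cyc n) (pred_cyc n c)) else 0)"
    by (rule earlier_run_rec[OF pred_cyclic n0])
  show "earlier_run D (succ_cyc n) c =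
      (if earlier D (succ_cyc n) c then Suc (earlier_run D (succ_cyc n) (succ_cyc n c)) else 0)"
    by (rule earlier_run_rec[OF succ_cyclic n0])
  show "\<not> (earlier D (pred_cyc n) (succ_cyc n c) \<and> earlier D (succ_cyc n) c)"
    using pred_succ_cyc[OF c] by (auto simp: earlier_def)
  show "earlier_run D (pred_cyc n) c < n" "earlier_run D (succ_cyc n) c < n"
    using earlier_run_less[OF pred_cyclic n0] earlier_run_less[OF succ_cyclic n0] .
  show "\<not> earlier D (pred_cyc n) c \<Longrightarrow> earlier_run D (succ_cyc n) c \<le> n - 2"
    using earlier_run_le_of_not_earlier[where t = "pred_cyc n", OF funpow_succ_cyc_minus_one[OF c] assms] by blast
  show "\<not> earlier D (succ_cyc n) c \<Longrightarrow> earlier_run D (pred_cyc n) c \<le> n - 2"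
    using earlier_run_le_of_not_earlier[where t = "succ_cyc n", OF funpow_pred_cyc_minus_one[OF c] assms] by blast
qed

lemma run_profile_reflect:
  assumes prof: "run_profile n A B m p"
  shows "run_profile n (B \<circ> reflect_cyc n) (A \<circ> reflect_cyc n) (p \<circ> reflect_cyc n) (m \<circ> reflect_cyc n)"
  unfolding run_profile_def o_apply
proof (intro allI impI conjI)
  fix c assume c: "c < n"
  let ?r = "reflect_cyc n c"
  have r: "?r < n"
    using c by (simp add: reflect_cyc_less)
  note neighbours = succ_cyc_reflect_cyc[OF c] pred_cyc_reflect_cyc[OF c]
  show "p ?r = (if B ?r then Suc (p (reflect_cyc n (pred_cyc n c))) else 0)"
    using run_profile_right[OF prof r] by (simp add: neighbours)
  show "m ?r = (if A ?r then Suc (m (reflect_cyc n (succ_cyc n c))) else 0)"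
    using run_profile_left[OF prof r] by (simp add: neighbours)
  have "\<not> (A (succ_cyc n (pred_cyc n ?r)) \<and> B (pred_cyc n ?r))"
    by (rule run_profile_not_both[OF prof pred_cyc_less[OF r]])
  then show "\<not> (B (reflect_cyc n (succ_cyc n c)) \<and> A ?r)"
    using succ_pred_cyc[OF r] neighbours by auto
  show "p ?r < n" "m ?r < n"
    using run_profile_right_less[OF prof r] run_profile_left_less[OF prof r] .
  show "\<not> B ?r \<Longrightarrow> m ?r \<le> n - 2" "\<not> A ?r \<Longrightarrow> p ?r \<le> n - 2"
    using run_profile_left_le[OF prof r] run_profile_right_le[OF prof r] by simp_all
qed

text \<open>
  Beyond the common right run from i, of length at least n - 4, every window is short enough for
  window_inj.
\<close>

context
  fixes n i :: nat and A B A' B' :: "nat \<Rightarrow> bool" and m p m' p' :: "nat \<Rightarrow> nat"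
  assumes n: "8 < n" and i: "i < n"
    and prof: "run_profile n A B m p" and prof': "run_profile n A' B' m' p'"
    and win: "\<And>c. c < n \<Longrightarrow> window n (m c) (p c) = window n (m' c) (p' c)"
    and left_i: "A i" and not_left_i': "\<not> A' i"
begin

private lemma right_runs_at_disagreement: "p' i = p i \<and> n \<le> p i + 4"
proof -
  have m: "1 \<le> m i" "m i < n" and p: "p i < n" and q: "p' i \<le> n - 2"
    and eq: "window n (m i) (p i) = window n 0 (p' i)"
    using run_profile_left[OF prof i] run_profile_left[OF prof' i] left_i not_left_i' win[OF i]
      run_profile_left_less[OF prof i] run_profile_right_less[OF prof i]
      run_profile_right_le[OF prof' i not_left_i'] by simp_all
  show ?thesis
    using window_eq_zero_left_eq[OF n m p q eq] window_eq_zero_left_le[OF n m p q eq] by simp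
qed

private lemma right_chain:
  "k \<le> p i \<Longrightarrow> p ((succ_cyc n ^^ k) i) = p i - k \<and> p' ((succ_cyc n ^^ k) i) = p i - k \<and>
    (0 < k \<longrightarrow> m ((succ_cyc n ^^ k) i) = 0 \<and> m' ((succ_cyc n ^^ k) i) = 0)"
proof (induction k)
  case 0
  then show ?case using right_runs_at_disagreement by simp
next
  case (Suc k)
  let ?c = "(succ_cyc n ^^ k) i"
  have c: "?c < n" and c': "succ_cyc n ?c < n"
    using i by (simp_all add: funpow_succ_cyc_less succ_cyc_less)
  from Suc have runs: "p ?c = p i - k" "p' ?c = p i - k" and "k < p i"
    by auto
  then have "B ?c" "B' ?c"
    using run_profile_pos(2)[OF prof c] run_profile_pos(2)[OF prof' c] by simp_all
  then have "p ?c = Suc (p (succ_cyc n ?c))" "p' ?c = Suc (p' (succ_cyc n ?c))"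
    and "\<not> A (succ_cyc n ?c)" "\<not> A' (succ_cyc n ?c)"
    using run_profile_right[OF prof c] run_profile_right[OF prof' c]
      run_profile_not_both[OF prof c] run_profile_not_both[OF prof' c] by simp_all
  then show ?case
    using runs run_profile_left[OF prof c'] run_profile_left[OF prof' c'] by simp
qed

private lemma right_run_bound:
  "t \<le> n - 2 - p i \<Longrightarrow> p ((succ_cyc n ^^ (n - 1 - t)) i) \<le> t"
proof (induction t)
  case 0
  have "\<not> B (pred_cyc n i)"
    using run_profile_not_both[OF prof pred_cyc_less[OF i]] succ_pred_cyc[OF i] left_i by simp
  then show ?case
    using run_profile_right[OF prof pred_cyc_less[OF i]] funpow_succ_cyc_minus_one[OF i] by simp
next
  case (Suc t)
  let ?c = "(succ_cyc n ^^ (n - 1 - Suc t)) i"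
  have c: "?c < n"
    by (rule funpow_succ_cyc_less[OF i])
  have "n - 1 - t = Suc (n - 1 - Suc t)"
    using Suc.prems by simp
  then have "succ_cyc n ?c = (succ_cyc n ^^ (n - 1 - t)) i"
    by simp
  moreover have "p ?c \<le> Suc (p (succ_cyc n ?c))"
    using run_profile_right[OF prof c] by simp
  ultimately show ?case
    using Suc by simp
qed

private lemma left_run_bound:
  "p i + t < n \<Longrightarrow> m ((succ_cyc n ^^ (p i + t)) i) \<le> t"
proof (induction t)
  case 0
  then show ?case
    using right_chain[of "p i"] right_runs_at_disagreement n by simp
next
  case (Suc t)
  let ?c = "(succ_cyc n ^^ (p i + Suc t)) i"
  have c: "?c < n"
    by (rule funpow_succ_cyc_less[OF i])
  have "pred_cyc n ?c = (succ_cyc n ^^ (p i + t)) i"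
    using pred_succ_cyc[OF funpow_succ_cyc_less[OF i]] by simp
  moreover have "m ?c \<le> Suc (m (pred_cyc n ?c))"
    using run_profile_left[OF prof c] by simp
  ultimately show ?case
    using Suc by simp
qed

private lemma runs_agree_beyond_chain:
  assumes "p i < k" "k < n"
  shows "m ((succ_cyc n ^^ k) i) = m' ((succ_cyc n ^^ k) i) \<and> p ((succ_cyc n ^^ k) i) = p' ((succ_cyc n ^^ k) i)"
proof -
  let ?c = "(succ_cyc n ^^ k) i"
  have c: "?c < n"
    by (rule funpow_succ_cyc_less[OF i])
  have "p ?c \<le> n - 1 - k"
    using right_run_bound[of "n - 1 - k"] assms by simp
  moreover have "m ?c \<le> k - p i"
    using left_run_bound[of "k - p i"] assms by simp
  ultimately have "m ?c + p ?c + 5 \<le> n"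
    using assms right_runs_at_disagreement n by linarith
  then show ?thesis
    using window_inj[OF run_profile_left_less[OF prof c] run_profile_right_less[OF prof c]
        run_profile_left_less[OF prof' c] run_profile_right_less[OF prof' c]] win[OF c]
    by blast
qed

lemma run_profiles_agree_except_at:
  assumes c: "c < n"
  shows "(c \<noteq> i \<longrightarrow> A c = A' c) \<and> B c = B' c"
proof -
  obtain k where k: "k < n" "(succ_cyc n ^^ k) i = c"
    using ex_funpow_succ_cyc[OF i c] by blast
  show ?thesis
  proof (cases "k = 0")
    case True
    then show ?thesis
      using k right_runs_at_disagreement run_profile_pos(2)[OF prof i] run_profile_pos(2)[OF prof' i] by simp
  next
    case False
    have "m c = m' c \<and> p c = p' c"
      using right_chain[of k] runs_agree_beyond_chain[of k] k False by (cases "k \<le> p i") auto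
    then show ?thesis
      using run_profile_pos[OF prof c] run_profile_pos[OF prof' c] by simp
  qed
qed

end

lemma run_profiles_left_disagreement:
  assumes n: "8 < n" and prof: "run_profile n A B m p" and prof': "run_profile n A' B' m' p'"
    and win: "\<And>c. c < n \<Longrightarrow> window n (m c) (p c) = window n (m' c) (p' c)"
    and i: "i < n" and "A i \<noteq> A' i"
  shows "\<forall>c<n. (A c \<noteq> A' c \<longleftrightarrow> c = i) \<and> B c = B' c"
proof (cases "A i")
  case True
  then show ?thesis
    using run_profiles_agree_except_at[OF n i prof prof' win] assms(6) by blast
next
  case False
  then show ?thesis
    using run_profiles_agree_except_at[OF n i prof' prof win[symmetric]] assms(6) by blast
qed

lemma run_profiles_right_disagreement:
  assumes n: "8 < n" and prof: "run_profile n A B m p" and prof': "run_profile n A' B' m' p'"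
    and win: "\<And>c. c < n \<Longrightarrow> window n (m c) (p c) = window n (m' c) (p' c)"
    and i: "i < n" and "B i \<noteq> B' i"
  shows "\<forall>c<n. (B c \<noteq> B' c \<longleftrightarrow> c = i) \<and> A c = A' c"
proof -
  let ?r = "reflect_cyc n"
  have r: "?r c < n" for c
    using n by (simp add: reflect_cyc_less)
  have win_r: "window n ((p \<circ> ?r) c) ((m \<circ> ?r) c) = window n ((p' \<circ> ?r) c) ((m' \<circ> ?r) c)" for c
    using window_swap[OF run_profile_left_less[OF prof r] run_profile_right_less[OF prof r]]
      window_swap[OF run_profile_left_less[OF prof' r] run_profile_right_less[OF prof' r]] win[OF r]
    by simp
  have "(B \<circ> ?r) (?r i) \<noteq> (B' \<circ> ?r) (?r i)"
    using assms(6) reflect_reflect_cyc[OF i] by simp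
  from run_profiles_left_disagreement[OF n run_profile_reflect[OF prof] run_profile_reflect[OF prof']
      win_r r this]
  have reflected: "\<forall>c<n. ((B \<circ> ?r) c \<noteq> (B' \<circ> ?r) c \<longleftrightarrow> c = ?r i) \<and> (A \<circ> ?r) c = (A' \<circ> ?r) c" .
  show ?thesis
  proof (intro allI impI)
    fix c assume c: "c < n"
    have "?r c = ?r i \<longleftrightarrow> c = i"
      using reflect_reflect_cyc[OF c] reflect_reflect_cyc[OF i] by metis
    then show "(B c \<noteq> B' c \<longleftrightarrow> c = i) \<and> A c = A' c"
      using reflected[rule_format, OF r[of c]] reflect_reflect_cyc[OF c] by simp
  qed
qed

section \<open>Labels\<close>

lemma arcs_eq: "arcs n = {(pred_cyc n c, c) | c. c < n} \<union> {(succ_cyc n c, c) | c. c < n}"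
proof -
  have "{(i, (i + 1) mod n) | i. i < n} = {(pred_cyc n c, c) | c. c < n}"
  proof (intro set_eqI iffI)
    fix e assume "e \<in> {(i, (i + 1) mod n) | i. i < n}"
    then obtain i where "i < n" "e = (pred_cyc n (succ_cyc n i), succ_cyc n i)"
      using pred_succ_cyc by (auto simp: succ_cyc_def)
    then show "e \<in> {(pred_cyc n c, c) | c. c < n}"
      using succ_cyc_less by blast
  next
    fix e assume "e \<in> {(pred_cyc n c, c) | c. c < n}"
    then obtain c where "c < n" "e = (pred_cyc n c, succ_cyc n (pred_cyc n c))"
      using succ_pred_cyc by auto
    then show "e \<in> {(i, (i + 1) mod n) | i. i < n}"
      using pred_cyc_less by (auto simp: succ_cyc_def)
  qed
  then show ?thesis
    by (simp add: arcs_def succ_cyc_def)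
qed

lemma disagreement_arcs:
  "{e \<in> arcs n. lab D e \<noteq> lab D' e} =
    {(pred_cyc n c, c) | c. c < n \<and> earlier D (pred_cyc n) c \<noteq> earlier D' (pred_cyc n) c} \<union>
    {(succ_cyc n c, c) | c. c < n \<and> earlier D (succ_cyc n) c \<noteq> earlier D' (succ_cyc n) c}"
  unfolding arcs_eq by (auto simp: lab_def earlier_def)

lemma card_single_disagreement:
  assumes "i < n" and "\<forall>c<n. P c \<longleftrightarrow> c = i" and "\<forall>c<n. \<not> Q c"
  shows "card ({(f c, c) | c. c < n \<and> P c} \<union> {(g c, c) | c. c < n \<and> Q c}) = 1"
proof -
  have "{(f c, c) | c. c < n \<and> P c} \<union> {(g c, c) | c. c < n \<and> Q c} = {(f i, i)}"
    using assms by auto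
  then show ?thesis by simp
qed

theorem mainTheorem20:
  fixes n :: nat and D D' :: "nat set list"
  assumes "n > 8"
    and "is_schedule n D" and "is_schedule n D'"
    and "special_pair n D D'"
  shows "card {e \<in> arcs n. lab D e \<noteq> lab D' e} = 1"
proof -
  have n: "8 < n" "1 < n"
    using assms(1) by simp_all
  have eq: "sched_fun n D = sched_fun n D'" and "\<not> sched_equiv n D D'"
    using assms(4) by (simp_all add: special_pair_def)
  note profiles = run_profile_earlier[OF n(2), of D] run_profile_earlier[OF n(2), of D']
  note window_eq = window_eq_of_sched_fun_eq[OF assms(2,3) eq]
  obtain i where i: "i < n" and differ:
    "earlier D (pred_cyc n) i \<noteq> earlier D' (pred_cyc n) i \<or> earlier D (succ_cyc n) i \<noteq> earlier D' (succ_cyc n) i"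
    using \<open>\<not> sched_equiv n D D'\<close> disagreement_arcs[of n D D'] unfolding sched_equiv_def by blast
  from differ show ?thesis
  proof
    assume "earlier D (pred_cyc n) i \<noteq> earlier D' (pred_cyc n) i"
    from run_profiles_left_disagreement[OF n(1) profiles window_eq i this] show ?thesis
      unfolding disagreement_arcs by (intro card_single_disagreement[OF i]) auto
  next
    assume "earlier D (succ_cyc n) i \<noteq> earlier D' (succ_cyc n) i"
    from run_profiles_right_disagreement[OF n(1) profiles window_eq i this] show ?thesis
      unfolding disagreement_arcs by (subst Un_commute, intro card_single_disagreement[OF i]) auto
  qed
qed

end
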